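(* Let $(\Omega,\mathcal F,\mathbb P)$ be a probability space with a measurable action $\{\theta_x\}_{x\in\mathbb R^{2d}}$ under which $\mathbb P$ is invariant, and let $v(x,\omega)=\hat v(\theta_x\omega)$ be a stationary process with $\hat v$ measurable and $\mathbb E|\hat v|<\infty$. For $\ell=(\ell_1,\dots,\ell_{2d})$ with $\ell_i>0$ put $I(\ell)=\prod_{i=1}^{2d}[-\ell_i,\ell_i]$. Then for $\mathbb P$-almost every $\omega$ there is a sequence $\ell^r=(\ell^r_1,\dots,\ell^r_{2d})$ with $\ell^r_i\to\infty$ as $r\to\infty$ for each $i$, such that $$\sup_r\ \sigma(\partial I(\ell^r))^{-1}\int_{\partial I(\ell^r)}|v(x,\omega)|\,\sigma(dx)<\infty,$$ where $\sigma$ is the $(2d-1)$-dimensional surface measure. *)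

theory Defs
  imports "HOL-Probability.Probability"
begin

text \<open>Integral of a nonnegative function over the boundary of I(l) with respect to the
 (n-1)-dimensional surface measure: the boundary is the union of the 2n flat faces
 {x in I(l). x_i = s l_i} (s = -1, 1), which overlap only in null sets; on each face the
 surface measure is (n-1)-dimensional Lebesgue measure in the remaining coordinates.\<close>
definition boundary_integral :: "real^'n \<Rightarrow> (real^'n \<Rightarrow> ennreal) \<Rightarrow> ennreal" where
  "boundary_integral l f =
     (\<Sum>i\<in>UNIV. \<Sum>s\<in>{-1, 1::real}.
        \<integral>\<^sup>+ z. f (\<chi> j. if j = i then s * l $ i else z j)
          \<partial>(PiM (UNIV - {i}) (\<lambda>j. restrict_space lborel {- (l $ j) .. l $ j})))"

definition boundary_measure :: "real^'n \<Rightarrow> ennreal" where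
  "boundary_measure l = boundary_integral l (\<lambda>_. 1)"

end

theory Submission
  imports Defs
begin

text \<open>By stationarity |v(x)| has the same mean E|v| at every point x, so by Tonelli the
 normalised boundary average of |v| over each cube I(n+1,...,n+1) has expectation E|v|.
 Fatou's lemma bounds the expectation of the liminf of these averages by E|v| < \<infinity>; hence
 almost surely the liminf is finite and the averages stay bounded along a subsequence of
 cubes, whose side lengths still tend to infinity.\<close>

abbreviation face_measure :: "real^'n \<Rightarrow> 'n \<Rightarrow> ('n \<Rightarrow> real) measure" where
  "face_measure l i \<equiv> PiM (UNIV - {i}) (\<lambda>j. restrict_space lborel {- (l $ j) .. l $ j})"

lemma product_sigma_finite_restrict_lborel:
  "product_sigma_finite (\<lambda>j. restrict_space lborel {a j .. b j :: real})"
  unfolding product_sigma_finite_def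
  by (auto intro!: sigma_finite_measure_restrict_space lborel.sigma_finite_measure_axioms)

lemma sigma_finite_face_measure: "sigma_finite_measure (face_measure l i)"
  by (rule product_sigma_finite.sigma_finite[OF product_sigma_finite_restrict_lborel]) simp

lemma nn_integral_one_face_measure:
  assumes "\<And>j. 0 \<le> l $ j"
  shows "(\<integral>\<^sup>+ z. 1 \<partial>face_measure l i) = (\<Prod>j\<in>UNIV - {i}. ennreal (2 * l $ j))"
proof -
  have "emeasure (face_measure l i) (PiE (UNIV - {i}) (\<lambda>j. {- (l $ j) .. l $ j}))
      = (\<Prod>j\<in>UNIV - {i}. emeasure (restrict_space lborel {- (l $ j) .. l $ j}) {- (l $ j) .. l $ j})"
    by (rule product_sigma_finite.emeasure_PiM[OF product_sigma_finite_restrict_lborel])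
      (auto simp: sets_restrict_space)
  with assms show ?thesis
    by (simp add: space_PiM space_restrict_space emeasure_restrict_space)
qed

lemma measurable_face_embedding:
  "(\<lambda>z. (\<chi> j. if j = i then c else z j) :: real^'n) \<in> borel_measurable (face_measure l i)"
proof (subst borel_measurable_euclidean_space, intro ballI)
  fix b :: "real^'n"
  assume "b \<in> Basis"
  then obtain k where b: "b = axis k 1"
    by (auto simp: Basis_vec_def)
  have component: "(\<lambda>z. (\<chi> j. if j = i then c else z j) \<bullet> b) = (\<lambda>z. if k = i then c else z k)"
    by (simp add: b cart_eq_inner_axis[symmetric])
  have "(\<lambda>z. z k) \<in> borel_measurable (face_measure l i)" if "k \<noteq> i"
  proof -
    have "(\<lambda>z. z k) \<in> measurable (face_measure l i) (restrict_space lborel {- (l $ k) .. l $ k})"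
      using that by (intro measurable_component_singleton) auto
    moreover have "(\<lambda>x. x) \<in> measurable (restrict_space lborel {- (l $ k) .. l $ k}) borel"
      by (intro measurable_restrict_space1) simp
    ultimately show ?thesis
      by (rule measurable_comp[where g = "\<lambda>x. x", unfolded comp_def])
  qed
  then show "(\<lambda>z. (\<chi> j. if j = i then c else z j) \<bullet> b) \<in> borel_measurable (face_measure l i)"
    unfolding component by (cases "k = i") simp_all
qed

lemma measurable_face_restriction:
  fixes F :: "real^'n \<Rightarrow> 'a \<Rightarrow> ennreal"
  assumes "(\<lambda>(x, \<omega>). F x \<omega>) \<in> borel_measurable (lborel \<Otimes>\<^sub>M M)"
  shows "(\<lambda>(\<omega>, z). F (\<chi> j. if j = i then c else z j) \<omega>) \<in> borel_measurable (M \<Otimes>\<^sub>M face_measure l i)"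
proof -
  have "(\<lambda>p. (\<chi> j. if j = i then c else snd p j) :: real^'n) \<in> measurable (M \<Otimes>\<^sub>M face_measure l i) lborel"
    unfolding measurable_lborel2
    using measurable_comp[OF measurable_snd measurable_face_embedding] by (simp add: comp_def)
  then have "(\<lambda>p. ((\<chi> j. if j = i then c else snd p j) :: real^'n, fst p))
      \<in> measurable (M \<Otimes>\<^sub>M face_measure l i) (lborel \<Otimes>\<^sub>M M)"
    by (intro measurable_Pair) auto
  from measurable_comp[OF this assms] show ?thesis
    by (simp add: comp_def case_prod_beta')
qed

lemma
  fixes F :: "real^'n \<Rightarrow> 'a \<Rightarrow> ennreal"
  assumes "sigma_finite_measure M"
    and F: "(\<lambda>(x, \<omega>). F x \<omega>) \<in> borel_measurable (lborel \<Otimes>\<^sub>M M)"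
  shows borel_measurable_boundary_integral:
      "(\<lambda>\<omega>. boundary_integral l (\<lambda>x. F x \<omega>)) \<in> borel_measurable M"
    and nn_integral_boundary_integral:
      "(\<integral>\<^sup>+ \<omega>. boundary_integral l (\<lambda>x. F x \<omega>) \<partial>M) = boundary_integral l (\<lambda>x. \<integral>\<^sup>+ \<omega>. F x \<omega> \<partial>M)"
proof -
  have face_measurable:
      "(\<lambda>\<omega>. \<integral>\<^sup>+ z. F (\<chi> j. if j = i then c else z j) \<omega> \<partial>face_measure l i) \<in> borel_measurable M" for i c
    using sigma_finite_measure.borel_measurable_nn_integral[OF sigma_finite_face_measure
        measurable_face_restriction[OF F]]
    by simp
  have face_tonelli: "(\<integral>\<^sup>+ \<omega>. (\<integral>\<^sup>+ z. F (\<chi> j. if j = i then c else z j) \<omega> \<partial>face_measure l i) \<partial>M)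
      = (\<integral>\<^sup>+ z. (\<integral>\<^sup>+ \<omega>. F (\<chi> j. if j = i then c else z j) \<omega> \<partial>M) \<partial>face_measure l i)" for i c
  proof -
    have "pair_sigma_finite M (face_measure l i)"
      by (simp add: pair_sigma_finite_def assms(1) sigma_finite_face_measure)
    from pair_sigma_finite.Fubini'[OF this measurable_face_restriction[OF F]] show ?thesis
      by simp
  qed
  show "(\<lambda>\<omega>. boundary_integral l (\<lambda>x. F x \<omega>)) \<in> borel_measurable M"
    unfolding boundary_integral_def using face_measurable by (intro borel_measurable_sum) auto
  show "(\<integral>\<^sup>+ \<omega>. boundary_integral l (\<lambda>x. F x \<omega>) \<partial>M) = boundary_integral l (\<lambda>x. \<integral>\<^sup>+ \<omega>. F x \<omega> \<partial>M)"
    unfolding boundary_integral_def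
    by (simp add: nn_integral_sum nn_integral_add borel_measurable_sum borel_measurable_add
        face_measurable face_tonelli)
qed

lemma boundary_integral_const: "boundary_integral l (\<lambda>_. c) = c * boundary_measure l"
  unfolding boundary_measure_def boundary_integral_def
  using nn_integral_cmult[of "\<lambda>_. 1 :: ennreal"] by (simp add: sum_distrib_left mult.left_commute)

lemma boundary_measure_eq:
  assumes "\<And>j. 0 \<le> l $ j"
  shows "boundary_measure l = ennreal (\<Sum>i\<in>UNIV. 2 * (\<Prod>j\<in>UNIV - {i}. 2 * l $ j))"
proof -
  have "boundary_measure l = (\<Sum>i\<in>UNIV. 2 * ennreal (\<Prod>j\<in>UNIV - {i}. 2 * l $ j))"
    unfolding boundary_measure_def boundary_integral_def
    using assms by (simp del: nn_integral_const add: nn_integral_one_face_measure prod_ennreal)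
  also have "\<dots> = (\<Sum>i\<in>UNIV. ennreal (2 * (\<Prod>j\<in>UNIV - {i}. 2 * l $ j)))"
    using assms by (simp add: ennreal_mult prod_nonneg)
  finally show ?thesis
    using assms by (simp add: prod_nonneg)
qed

lemma boundary_measure_pos_finite:
  assumes "\<And>j. 0 < l $ j"
  shows "boundary_measure l \<noteq> 0" and "boundary_measure l \<noteq> \<infinity>"
proof -
  have "(\<Sum>i\<in>UNIV. 2 * (\<Prod>j\<in>UNIV - {i}. 2 * l $ j)) > 0"
    using assms by (intro sum_pos mult_pos_pos prod_pos) auto
  moreover have "boundary_measure l = ennreal (\<Sum>i\<in>UNIV. 2 * (\<Prod>j\<in>UNIV - {i}. 2 * l $ j))"
    using assms less_imp_le by (intro boundary_measure_eq) blast
  ultimately show "boundary_measure l \<noteq> 0" and "boundary_measure l \<noteq> \<infinity>"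
    by auto
qed

lemma nn_integral_boundary_average:
  fixes F :: "real^'n \<Rightarrow> 'a \<Rightarrow> ennreal"
  assumes "sigma_finite_measure M"
    and "(\<lambda>(x, \<omega>). F x \<omega>) \<in> borel_measurable (lborel \<Otimes>\<^sub>M M)"
    and mean: "\<And>x. (\<integral>\<^sup>+ \<omega>. F x \<omega> \<partial>M) = C"
    and "\<And>j. 0 < l $ j"
  shows "(\<integral>\<^sup>+ \<omega>. boundary_integral l (\<lambda>x. F x \<omega>) / boundary_measure l \<partial>M) = C"
  using assms boundary_measure_pos_finite[of l]
  by (simp add: nn_integral_divide borel_measurable_boundary_integral nn_integral_boundary_integral
      mean boundary_integral_const ennreal_mult_divide_eq)

lemma nn_integral_invariant:
  assumes T: "T \<in> measurable M M" and "distr M M T = M" and g: "g \<in> borel_measurable M"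
  shows "(\<integral>\<^sup>+ \<omega>. g (T \<omega>) \<partial>M) = (\<integral>\<^sup>+ \<omega>. g \<omega> \<partial>M)"
  using nn_integral_distr[OF T, of g] assms(2) g by simp

lemma liminf_less_top_imp_bounded_subseq:
  fixes X :: "nat \<Rightarrow> 'a :: complete_linorder"
  assumes "liminf X < top"
  shows "\<exists>N. (\<forall>r. r \<le> N r) \<and> (SUP r. X (N r)) < top"
proof -
  obtain y where "y < top" and "\<not> eventually (\<lambda>n. y < X n) sequentially"
    using assms le_Liminf_iff[of top sequentially X] by (auto simp: top_unique)
  then have "\<forall>r. \<exists>n\<ge>r. X n \<le> y"
    by (simp add: not_eventually not_less frequently_sequentially)
  then obtain N where "\<And>r. r \<le> N r \<and> X (N r) \<le> y"
    by metis
  with \<open>y < top\<close> show ?thesis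
    by (intro exI[of _ N]) (auto intro: SUP_least le_less_trans)
qed

lemma AE_bounded_subseq_of_nn_integral_bounded:
  fixes A :: "nat \<Rightarrow> 'a \<Rightarrow> ennreal"
  assumes A: "\<And>n. A n \<in> borel_measurable M"
    and bound: "\<And>n. (\<integral>\<^sup>+ \<omega>. A n \<omega> \<partial>M) \<le> C" and "C < \<infinity>"
  shows "AE \<omega> in M. \<exists>N. (\<forall>r. r \<le> N r) \<and> (SUP r. A (N r) \<omega>) < \<infinity>"
proof -
  have "(\<integral>\<^sup>+ \<omega>. liminf (\<lambda>n. A n \<omega>) \<partial>M) \<le> liminf (\<lambda>n. \<integral>\<^sup>+ \<omega>. A n \<omega> \<partial>M)"
    by (rule nn_integral_liminf[OF A])
  also have "\<dots> \<le> C"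
    using bound by (intro order_trans[OF Liminf_le_Limsup Limsup_bounded]) simp_all
  finally have "AE \<omega> in M. liminf (\<lambda>n. A n \<omega>) \<noteq> \<infinity>"
    using \<open>C < \<infinity>\<close> by (intro nn_integral_PInf_AE) (auto intro: borel_measurable_liminf A)
  then show ?thesis
  proof eventually_elim
    case (elim \<omega>)
    then show ?case
      using liminf_less_top_imp_bounded_subseq[of "\<lambda>n. A n \<omega>"] by (simp add: less_top)
  qed
qed

lemma AE_bounded_boundary_averages:
  fixes F :: "real^'n \<Rightarrow> 'a \<Rightarrow> ennreal"
  assumes M: "sigma_finite_measure M"
    and joint: "(\<lambda>(x, \<omega>). F x \<omega>) \<in> borel_measurable (lborel \<Otimes>\<^sub>M M)"
    and mean: "\<And>x. (\<integral>\<^sup>+ \<omega>. F x \<omega> \<partial>M) = C" and "C < \<infinity>"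
  shows "AE \<omega> in M. \<exists>l :: nat \<Rightarrow> real^'n.
           (\<forall>r i. l r $ i > 0) \<and>
           (\<forall>i. filterlim (\<lambda>r. l r $ i) at_top sequentially) \<and>
           (SUP r. boundary_integral (l r) (\<lambda>x. F x \<omega>) / boundary_measure (l r)) < \<infinity>"
proof -
  define L :: "nat \<Rightarrow> real^'n" where "L n = (\<chi> j. real n + 1)" for n
  have L_pos: "0 < L n $ j" for n j
    by (simp add: L_def)
  have "(\<lambda>\<omega>. boundary_integral (L n) (\<lambda>x. F x \<omega>) / boundary_measure (L n)) \<in> borel_measurable M" for n
    using borel_measurable_boundary_integral[OF M joint] by measurable
  then have "AE \<omega> in M. \<exists>N. (\<forall>r. r \<le> N r) \<and>
      (SUP r. boundary_integral (L (N r)) (\<lambda>x. F x \<omega>) / boundary_measure (L (N r))) < \<infinity>"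
    using \<open>C < \<infinity>\<close> nn_integral_boundary_average[OF M joint mean L_pos]
    by (intro AE_bounded_subseq_of_nn_integral_bounded[OF _ eq_refl]) auto
  then show ?thesis
  proof eventually_elim
    case (elim \<omega>)
    then obtain N where "\<And>r. r \<le> N r" and "(SUP r. boundary_integral (L (N r))
        (\<lambda>x. F x \<omega>) / boundary_measure (L (N r))) < \<infinity>"
      by blast
    moreover have "filterlim (\<lambda>r. L (N r) $ i) at_top sequentially" for i
    proof (rule filterlim_at_top_mono[OF filterlim_real_sequentially always_eventually], intro allI)
      show "real r \<le> L (N r) $ i" for r
        using \<open>\<And>r. r \<le> N r\<close>[of r] by (simp add: L_def)
    qed
    ultimately show ?case
      by (intro exI[of _ "\<lambda>r. L (N r)"]) (auto simp: L_pos)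
  qed
qed

theorem proposition3p3:
  fixes M :: "'a measure"
    and \<theta> :: "real^'n \<Rightarrow> 'a \<Rightarrow> 'a"
    and vhat :: "'a \<Rightarrow> real"
    and d :: nat
  assumes "prob_space M"
    and dim: "CARD('n) = 2 * d"
    and action_meas: "(\<lambda>(x, \<omega>). \<theta> x \<omega>) \<in> measurable (lborel \<Otimes>\<^sub>M M) M"
    and action_zero: "\<And>\<omega>. \<omega> \<in> space M \<Longrightarrow> \<theta> 0 \<omega> = \<omega>"
    and action_add: "\<And>x y \<omega>. \<omega> \<in> space M \<Longrightarrow> \<theta> (x + y) \<omega> = \<theta> x (\<theta> y \<omega>)"
    and invariant: "\<And>x. distr M M (\<theta> x) = M"
    and vhat_meas: "vhat \<in> borel_measurable M"
    and vhat_int: "integrable M vhat"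
  shows "AE \<omega> in M. \<exists>l :: nat \<Rightarrow> real^'n.
           (\<forall>r i. l r $ i > 0) \<and>
           (\<forall>i. filterlim (\<lambda>r. l r $ i) at_top sequentially) \<and>
           (SUP r. boundary_integral (l r) (\<lambda>x. ennreal \<bar>vhat (\<theta> x \<omega>)\<bar>)
                     / boundary_measure (l r)) < \<infinity>"
proof -
  interpret prob_space M by fact
  have abs_vhat: "(\<lambda>\<omega>. ennreal \<bar>vhat \<omega>\<bar>) \<in> borel_measurable M"
    using vhat_meas by measurable
  have "\<theta> x \<in> measurable M M" for x
    using measurable_comp[OF measurable_Pair1' action_meas] by (simp add: comp_def)
  then have mean: "(\<integral>\<^sup>+ \<omega>. ennreal \<bar>vhat (\<theta> x \<omega>)\<bar> \<partial>M) = (\<integral>\<^sup>+ \<omega>. ennreal \<bar>vhat \<omega>\<bar> \<partial>M)" for x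
    using nn_integral_invariant[OF _ invariant abs_vhat] by blast
  have joint: "(\<lambda>(x, \<omega>). ennreal \<bar>vhat (\<theta> x \<omega>)\<bar>) \<in> borel_measurable (lborel \<Otimes>\<^sub>M M)"
    using measurable_comp[OF action_meas abs_vhat] by (simp add: comp_def case_prod_beta')
  have "(\<integral>\<^sup>+ \<omega>. ennreal \<bar>vhat \<omega>\<bar> \<partial>M) < \<infinity>"
    using vhat_int by (simp add: integrable_iff_bounded)
  with AE_bounded_boundary_averages[OF sigma_finite_measure_axioms joint mean] show ?thesis
    by simp
qed

end
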